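(* Let $\{\delta_q\}_{q\in\Sigma}$ be a Delta-basis of $\mathfrak{U}(\mathbb{R})$ with dual Sigma-basis $\{\sigma_q\}_{q\in\Sigma}$. For every $u\in[L^1_{loc}(\mathbb{R})]^*$ there is a unique $\widetilde{u}\in\mathfrak{U}(\mathbb{R})$ such that $\int^*\widetilde{u}v\,dx=\int^*uv\,dx$ for all $v\in\mathfrak{U}(\mathbb{R})$, and $$\widetilde{u}(x)=\sum_{q\in\Sigma}\left[\int^*u(\xi)\delta_q(\xi)d\xi\right]\sigma_q(x)=\sum_{q\in\Sigma}\left[\int^*u(\xi)\sigma_q(\xi)d\xi\right]\delta_q(x).$$
   Context: Framework (Λ-limits / nonstandard analysis): $\mathfrak{X}=\mathcal{P}_{fin}(\mathfrak{F}(\mathbb{R},\mathbb{R}))$ directed by inclusion; $\mathbb{R}^*\supset\mathbb{R}$ is a non-Archimedean ordered field of Λ-limits of nets $\mathfrak{X}\to\mathbb{R}$; internal sets/functions, natural extensions $E^*,f^*$, hyperfinite sums are defined via Λ-limits; $\int^*$ is the natural extension of the Lebesgue integral. For $\lambda\in\mathfrak{X}$, $V_\lambda$ is the span of $\lambda$; an internal $u=\lim_{\lambda\uparrow\Lambda}u_\lambda$ is an ultrafunction if $u_\lambda\in V_\lambda$ for all $\lambda$; for a vector space $W$ of real functions, $\widetilde{W}=W^*\cap\{\text{ultrafunctions}\}$. Grid: a positive infinite $\beta\in\mathbb{R}^*$, a hyperfinite $\Gamma=\{\gamma_0<\dots<\gamma_\ell\}\subset\mathbb{R}^*$ with $\gamma_0=-\beta$,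 $\gamma_\ell=\beta$, $0<\gamma_{j+1}-\gamma_j<\eta$ for a fixed infinitesimal $\eta$, and $\mathbb{R}\subseteq\Gamma$; $\mathbb{I}_j=(\gamma_j,\gamma_{j+1})_{\mathbb{R}^*}$ with characteristic function $\chi_j$. $\mathfrak{U}(\mathbb{R})$: functions $u:[-\beta,\beta]\to\mathbb{R}^*$ of the form $\sum_{j=0}^{\ell-1}v_j\chi_j$ with $v_j\in\widetilde{\mathcal{C}^1(\mathbb{R})}$ (extended by $0$ outside $[-\beta,\beta]$ when integrating against functions on $\mathbb{R}^*$). Values at grid points: $u(\gamma_j)=\tfrac12(u(\gamma_j^+)+u(\gamma_j^-))$ for $1\le j\le\ell-1$, $u(-\beta)=u(\gamma_0^+)$, $u(\beta)=u(\gamma_\ell^-)$. For $q\in[-\beta,\beta]$, $\delta_q$ is the unique element of $\mathfrak{U}(\mathbb{R})$ with $\int^*v\delta_q=v(q)$ for all $v\in\mathfrak{U}(\mathbb{R})$. A Delta-basis is a basis $\{\delta_a\}_{a\in\Sigma}$ of $\mathfrak{U}(\mathbb{R})$ of such functions; its dual basis $\{\sigma_a\}_{a\in\Sigma}$ ($\int^*\delta_a\sigma_b=\delta_{ab}$) is the Sigma-basis. *)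

theory Defs
  imports "HOL-Analysis.Analysis"
begin

text \<open>Lambda-limits are modelled by a fine ultrafilter F on the index type of
finite sets of real functions. A hyperreal is represented by a net (idx => real);
internal functions by nets of real functions; everything is compared modulo F.\<close>

type_synonym idx = "(real \<Rightarrow> real) set"
type_synonym hr = "idx \<Rightarrow> real"
type_synonym ifun = "idx \<Rightarrow> real \<Rightarrow> real"

definition fine_ultrafilter :: "idx filter \<Rightarrow> bool" where
  "fine_ultrafilter F \<longleftrightarrow> F \<noteq> bot \<and>
     (\<forall>P. eventually P F \<or> eventually (\<lambda>l. \<not> P l) F) \<and>
     (\<forall>l0. finite l0 \<longrightarrow> eventually (\<lambda>l. finite l \<and> l0 \<subseteq> l) F)"

definition heq :: "idx filter \<Rightarrow> hr \<Rightarrow> hr \<Rightarrow> bool" where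
  "heq F a b \<longleftrightarrow> eventually (\<lambda>l. a l = b l) F"

text \<open>Grid assumptions: beta positive infinite, eta positive infinitesimal,
Gamma hyperfinite with endpoints -beta, beta, mesh < eta, containing all reals.\<close>
definition grid_ok :: "idx filter \<Rightarrow> hr \<Rightarrow> hr \<Rightarrow> (idx \<Rightarrow> real set) \<Rightarrow> bool" where
  "grid_ok F \<beta> \<eta> G \<longleftrightarrow>
     (\<forall>n::nat. eventually (\<lambda>l. real n < \<beta> l) F) \<and>
     eventually (\<lambda>l. 0 < \<eta> l) F \<and>
     (\<forall>n::nat. eventually (\<lambda>l. \<eta> l < 1 / real (Suc n)) F) \<and>
     eventually (\<lambda>l. finite (G l) \<and> G l \<noteq> {} \<and> Min (G l) = - \<beta> l \<and> Max (G l) = \<beta> l) F \<and>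
     eventually (\<lambda>l. \<forall>x\<in>G l. \<forall>y\<in>G l. x < y \<and> (\<forall>z\<in>G l. \<not> (x < z \<and> z < y))
                       \<longrightarrow> y - x < \<eta> l) F \<and>
     (\<forall>r::real. eventually (\<lambda>l. r \<in> G l) F)"

definition Vspan :: "idx \<Rightarrow> (real \<Rightarrow> real) set" where
  "Vspan l = {f. \<exists>c. f = (\<lambda>x. \<Sum>g\<in>l. c g * g x)}"

definition C1 :: "(real \<Rightarrow> real) set" where
  "C1 = {f. \<exists>f'. (\<forall>x. (f has_real_derivative f' x) (at x)) \<and> continuous_on UNIV f'}"

definition L1loc :: "(real \<Rightarrow> real) set" where
  "L1loc = {f. f \<in> borel_measurable lborel \<and> (\<forall>a b. set_integrable lborel {a..b} f)}"

definition grid_pt :: "real set \<Rightarrow> nat \<Rightarrow> real" where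
  "grid_pt G j = sorted_list_of_set G ! j"

definition grid_len :: "real set \<Rightarrow> nat" where
  "grid_len G = card G - 1"

text \<open>The function sum_j v_j chi_j with the prescribed values at grid points
(average of one-sided limits inside, one-sided values at the endpoints),
extended by 0 outside [gamma_0, gamma_ell].\<close>
definition pw_val :: "real set \<Rightarrow> (nat \<Rightarrow> real \<Rightarrow> real) \<Rightarrow> real \<Rightarrow> real" where
  "pw_val G v x =
     (let n = grid_len G in
      if x \<in> G then
        (let j = (THE j. j \<le> n \<and> grid_pt G j = x) in
         if j = 0 then v 0 x
         else if j = n then v (n - 1) x
         else (v (j - 1) x + v j x) / 2)
      else (\<Sum>j<n. if grid_pt G j < x \<and> x < grid_pt G (Suc j) then v j x else 0))"

definition Ulevel :: "idx \<Rightarrow> real set \<Rightarrow> (real \<Rightarrow> real) set" where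
  "Ulevel l G = {f. \<exists>v. (\<forall>j < grid_len G. v j \<in> C1 \<and> v j \<in> Vspan l) \<and> f = pw_val G v}"

definition inU :: "idx filter \<Rightarrow> (idx \<Rightarrow> real set) \<Rightarrow> ifun \<Rightarrow> bool" where
  "inU F G u \<longleftrightarrow> eventually (\<lambda>l. u l \<in> Ulevel l (G l)) F"

definition inL1locStar :: "idx filter \<Rightarrow> ifun \<Rightarrow> bool" where
  "inL1locStar F u \<longleftrightarrow> eventually (\<lambda>l. u l \<in> L1loc) F"

definition app :: "ifun \<Rightarrow> hr \<Rightarrow> hr" where
  "app u x = (\<lambda>l. u l (x l))"

definition hint :: "ifun \<Rightarrow> ifun \<Rightarrow> hr" where
  "hint u v = (\<lambda>l. integral\<^sup>L lborel (\<lambda>x. u l x * v l x))"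

definition in_hint :: "idx filter \<Rightarrow> hr \<Rightarrow> hr \<Rightarrow> bool" where
  "in_hint F \<beta> x \<longleftrightarrow> eventually (\<lambda>l. - \<beta> l \<le> x l \<and> x l \<le> \<beta> l) F"

definition hmem :: "idx filter \<Rightarrow> hr \<Rightarrow> (idx \<Rightarrow> real set) \<Rightarrow> bool" where
  "hmem F q S \<longleftrightarrow> eventually (\<lambda>l. q l \<in> S l) F"

definition feq :: "idx filter \<Rightarrow> hr \<Rightarrow> ifun \<Rightarrow> ifun \<Rightarrow> bool" where
  "feq F \<beta> u w \<longleftrightarrow> (\<forall>x. in_hint F \<beta> x \<longrightarrow> heq F (app u x) (app w x))"

definition fam :: "(idx \<Rightarrow> real \<Rightarrow> real \<Rightarrow> real) \<Rightarrow> hr \<Rightarrow> ifun" where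
  "fam d q = (\<lambda>l. d l (q l))"

definition is_delta :: "idx filter \<Rightarrow> (idx \<Rightarrow> real set) \<Rightarrow> hr \<Rightarrow> ifun \<Rightarrow> bool" where
  "is_delta F G q dq \<longleftrightarrow> inU F G dq \<and>
     (\<forall>v. inU F G v \<longrightarrow> heq F (hint v dq) (app v q))"

definition delta_basis :: "idx filter \<Rightarrow> hr \<Rightarrow> (idx \<Rightarrow> real set) \<Rightarrow> (idx \<Rightarrow> real set)
      \<Rightarrow> (idx \<Rightarrow> real \<Rightarrow> real \<Rightarrow> real) \<Rightarrow> bool" where
  "delta_basis F \<beta> G S d \<longleftrightarrow>
     eventually (\<lambda>l. finite (S l)) F \<and>
     (\<forall>q. hmem F q S \<longrightarrow> in_hint F \<beta> q \<and> is_delta F G q (fam d q)) \<and>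
     (\<forall>v. inU F G v \<longrightarrow> (\<exists>c :: idx \<Rightarrow> real \<Rightarrow> real.
        feq F \<beta> v (\<lambda>l x. \<Sum>a\<in>S l. c l a * d l a x))) \<and>
     (\<forall>c :: idx \<Rightarrow> real \<Rightarrow> real.
        feq F \<beta> (\<lambda>l x. \<Sum>a\<in>S l. c l a * d l a x) (\<lambda>l x. 0) \<longrightarrow>
        (\<forall>q. hmem F q S \<longrightarrow> heq F (\<lambda>l. c l (q l)) (\<lambda>l. 0)))"

definition dual_basis :: "idx filter \<Rightarrow> (idx \<Rightarrow> real set) \<Rightarrow> (idx \<Rightarrow> real set)
      \<Rightarrow> (idx \<Rightarrow> real \<Rightarrow> real \<Rightarrow> real) \<Rightarrow> (idx \<Rightarrow> real \<Rightarrow> real \<Rightarrow> real) \<Rightarrow> bool" where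
  "dual_basis F G S d s \<longleftrightarrow>
     (\<forall>q. hmem F q S \<longrightarrow> inU F G (fam s q)) \<and>
     (\<forall>a b. hmem F a S \<longrightarrow> hmem F b S \<longrightarrow>
        heq F (hint (fam d a) (fam s b)) (\<lambda>l. if a l = b l then 1 else 0))"

end

theory Submission
  imports Defs
begin

text \<open>Everything happens levelwise.  At almost every level the bases are finite and
biorthogonal, and all elements of the level space are bounded with compact support, so
they can be integrated against any locally integrable function.  Expanding a test
function \<open>v\<close> in the Delta-basis, linearity and biorthogonality give
\<open>\<integral>(\<Sum>\<^sub>q (\<integral>u \<delta>\<^sub>q) \<sigma>\<^sub>q) v = \<integral>u v\<close>.  Conversely, testing any solution
against the Sigma-basis pins down its Delta-coefficients as \<open>\<integral>u \<sigma>\<^sub>q\<close>, which gives the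
second formula and uniqueness.\<close>

definition bounded_compact_support :: "(real \<Rightarrow> real) \<Rightarrow> bool" where
  "bounded_compact_support f \<longleftrightarrow>
     f \<in> borel_measurable borel \<and> (\<exists>C a b. \<forall>x. \<bar>f x\<bar> \<le> C * indicator {a..b} x)"

lemma integrable_L1loc_mult:
  assumes f: "bounded_compact_support f" and w: "w \<in> L1loc"
  shows "integrable lborel (\<lambda>x. w x * f x)"
proof -
  obtain C a b where bound: "\<And>x. \<bar>f x\<bar> \<le> C * indicator {a..b} x"
    and f_meas: "f \<in> borel_measurable borel"
    using f unfolding bounded_compact_support_def by blast
  have w_meas: "w \<in> borel_measurable borel" and "set_integrable lborel {a..b} w"
    using w unfolding L1loc_def by auto
  then have "integrable lborel (\<lambda>x. C * \<bar>indicator {a..b} x *\<^sub>R w x\<bar>)"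
    unfolding set_integrable_def by auto
  then show ?thesis
  proof (rule Bochner_Integration.integrable_bound)
    show "(\<lambda>x. w x * f x) \<in> borel_measurable lborel" using w_meas f_meas by simp
    have "\<bar>w x * f x\<bar> \<le> \<bar>C * \<bar>indicator {a..b} x *\<^sub>R w x\<bar>\<bar>" for x
      using mult_left_mono[OF bound[of x] abs_ge_zero[of "w x"]]
      by (cases "x \<in> {a..b}") (simp_all add: abs_mult mult.commute,
          metis abs_ge_self abs_ge_zero mult_right_mono order_trans)
    then show "AE x in lborel. norm (w x * f x) \<le> norm (C * \<bar>indicator {a..b} x *\<^sub>R w x\<bar>)"
      by simp
  qed
qed

lemma bounded_compact_support_L1loc:
  assumes "bounded_compact_support f"
  shows "f \<in> L1loc"
proof -
  obtain C a b where bound: "\<And>x. \<bar>f x\<bar> \<le> C * indicator {a..b} x"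
    and f_meas: "f \<in> borel_measurable borel"
    using assms unfolding bounded_compact_support_def by blast
  have majorant: "integrable lborel (\<lambda>x. C * indicator {a..b} x :: real)"
    by (intro integrable_mult_right integrable_real_indicator) (auto simp: emeasure_lborel_Icc_eq)
  have "AE x in lborel. norm (f x) \<le> norm (C * indicator {a..b} x)"
    using bound by (intro AE_I2) (metis abs_ge_self order_trans real_norm_def)
  moreover have "f \<in> borel_measurable lborel" using f_meas by simp
  ultimately have "integrable lborel f"
    by (metis Bochner_Integration.integrable_bound[OF majorant])
  then show ?thesis
    unfolding L1loc_def set_integrable_def using f_meas
    by (auto simp: mult.commute intro: integrable_real_mult_indicator)
qed

lemma integral_mult_lincomb:
  fixes w :: "real \<Rightarrow> real" and g :: "'a \<Rightarrow> real \<Rightarrow> real"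
  assumes "finite A" and "\<And>a. a \<in> A \<Longrightarrow> integrable lborel (\<lambda>x. w x * g a x)"
  shows "(\<integral>x. w x * (\<Sum>a\<in>A. c a * g a x) \<partial>lborel) = (\<Sum>a\<in>A. c a * (\<integral>x. w x * g a x \<partial>lborel))"
proof -
  have "(\<lambda>x. w x * (\<Sum>a\<in>A. c a * g a x)) = (\<lambda>x. \<Sum>a\<in>A. c a * (w x * g a x))"
    by (simp add: sum_distrib_left mult.left_commute)
  then show ?thesis using assms by (simp add: integral_sum)
qed

lemma integral_lincomb_mult_biorthogonal:
  assumes S: "finite S" "b \<in> S"
    and p: "\<And>a. a \<in> S \<Longrightarrow> bounded_compact_support (p a)"
    and r: "bounded_compact_support (r b)"
    and biorth: "\<And>a. a \<in> S \<Longrightarrow> (\<integral>x. p a x * r b x \<partial>lborel) = (if a = b then 1 else 0)"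
  shows "(\<integral>x. (\<Sum>a\<in>S. c a * p a x) * r b x \<partial>lborel) = c b"
proof -
  have "(\<integral>x. (\<Sum>a\<in>S. c a * p a x) * r b x \<partial>lborel)
      = (\<integral>x. r b x * (\<Sum>a\<in>S. c a * p a x) \<partial>lborel)"
    by (simp add: mult.commute)
  also have "\<dots> = (\<Sum>a\<in>S. c a * (\<integral>x. r b x * p a x \<partial>lborel))"
    using S p r by (intro integral_mult_lincomb) (auto intro: integrable_L1loc_mult bounded_compact_support_L1loc)
  also have "\<dots> = (\<Sum>a\<in>S. if a = b then c a else 0)"
    using biorth by (intro sum.cong) (auto simp: mult.commute)
  also have "\<dots> = c b" using S by simp
  finally show ?thesis .
qed

lemma integral_biorthogonal_projection:
  assumes S: "finite S"
    and p: "\<And>a. a \<in> S \<Longrightarrow> bounded_compact_support (p a)"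
    and r: "\<And>a. a \<in> S \<Longrightarrow> bounded_compact_support (r a)"
    and biorth: "\<And>a b. a \<in> S \<Longrightarrow> b \<in> S \<Longrightarrow>
                   (\<integral>x. p a x * r b x \<partial>lborel) = (if a = b then 1 else 0)"
    and w: "w \<in> L1loc"
  shows "(\<integral>x. (\<Sum>q\<in>S. (\<integral>y. w y * p q y \<partial>lborel) * r q x) * (\<Sum>a\<in>S. c a * p a x) \<partial>lborel)
       = (\<integral>x. w x * (\<Sum>a\<in>S. c a * p a x) \<partial>lborel)"
proof -
  let ?v = "\<lambda>x. \<Sum>a\<in>S. c a * p a x"
  have vr: "integrable lborel (\<lambda>x. ?v x * r q x)" if "q \<in> S" for q
  proof -
    have "integrable lborel (\<lambda>x. p a x * r q x)" if "a \<in> S" for a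
      using p[OF that] r[OF \<open>q \<in> S\<close>] by (intro integrable_L1loc_mult bounded_compact_support_L1loc)
    then have "integrable lborel (\<lambda>x. \<Sum>a\<in>S. c a * (p a x * r q x))"
      by auto
    then show ?thesis by (simp add: sum_distrib_right mult.assoc)
  qed
  have "(\<integral>x. (\<Sum>q\<in>S. (\<integral>y. w y * p q y \<partial>lborel) * r q x) * ?v x \<partial>lborel)
      = (\<integral>x. ?v x * (\<Sum>q\<in>S. (\<integral>y. w y * p q y \<partial>lborel) * r q x) \<partial>lborel)"
    by (simp add: mult.commute)
  also have "\<dots> = (\<Sum>q\<in>S. (\<integral>y. w y * p q y \<partial>lborel) * (\<integral>x. ?v x * r q x \<partial>lborel))"
    using S vr by (rule integral_mult_lincomb)
  also have "\<dots> = (\<Sum>q\<in>S. c q * (\<integral>y. w y * p q y \<partial>lborel))"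
    using S p r biorth by (intro sum.cong) (simp_all add: integral_lincomb_mult_biorthogonal)
  also have "\<dots> = (\<integral>x. w x * ?v x \<partial>lborel)"
    using S p w by (intro integral_mult_lincomb[symmetric]) (auto intro: integrable_L1loc_mult)
  finally show ?thesis .
qed

lemma pw_val_linear:
  "pw_val G (\<lambda>j x. a * v j x + b * w j x) x = a * pw_val G v x + b * pw_val G w x"
proof (cases "x \<in> G")
  case True
  then show ?thesis unfolding pw_val_def Let_def by (simp add: algebra_simps add_divide_distrib)
next
  case False
  then show ?thesis
    unfolding pw_val_def Let_def
    by (simp add: sum.distrib sum_distrib_left if_distrib[of "\<lambda>y. a * y"] if_distrib[of "\<lambda>y. b * y"]
        flip: sum.distrib) (rule sum.cong; simp)
qed

lemma C1_linear_comb: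
  assumes "f \<in> C1" "g \<in> C1"
  shows "(\<lambda>x. a * f x + b * g x) \<in> C1"
proof -
  obtain f' g' where
    f: "\<And>x. (f has_real_derivative f' x) (at x)" "continuous_on UNIV f'" and
    g: "\<And>x. (g has_real_derivative g' x) (at x)" "continuous_on UNIV g'"
    using assms unfolding C1_def by blast
  have "((\<lambda>x. a * f x + b * g x) has_real_derivative (a * f' x + b * g' x)) (at x)" for x
    using DERIV_add[OF DERIV_cmult[OF f(1)] DERIV_cmult[OF g(1)]] by simp
  moreover have "continuous_on UNIV (\<lambda>x. a * f' x + b * g' x)"
    by (intro continuous_intros f g)
  ultimately show ?thesis unfolding C1_def by (intro CollectI exI[of _ "\<lambda>x. a * f' x + b * g' x"]) auto
qed

lemma Vspan_linear_comb:
  assumes "f \<in> Vspan l" "g \<in> Vspan l"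
  shows "(\<lambda>x. a * f x + b * g x) \<in> Vspan l"
proof -
  obtain c1 c2 where "f = (\<lambda>x. \<Sum>h\<in>l. c1 h * h x)" "g = (\<lambda>x. \<Sum>h\<in>l. c2 h * h x)"
    using assms unfolding Vspan_def by blast
  then have "(\<lambda>x. a * f x + b * g x) = (\<lambda>x. \<Sum>h\<in>l. (a * c1 h + b * c2 h) * h x)"
    by (simp add: sum_distrib_left sum.distrib algebra_simps)
  then show ?thesis unfolding Vspan_def by (intro CollectI exI)
qed

lemma zero_in_Ulevel: "(\<lambda>x. 0) \<in> Ulevel l G"
proof -
  have "(\<lambda>x. 0::real) \<in> C1" unfolding C1_def by (intro CollectI exI[of _ "\<lambda>x. 0"]) auto
  moreover have "(\<lambda>x. 0::real) \<in> Vspan l" unfolding Vspan_def by (intro CollectI exI[of _ "\<lambda>x. 0"]) auto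
  moreover have "pw_val G (\<lambda>j x. 0) = (\<lambda>x. 0)" unfolding pw_val_def Let_def by auto
  ultimately show ?thesis unfolding Ulevel_def by (intro CollectI exI[of _ "\<lambda>j x. 0"]) auto
qed

lemma Ulevel_linear_comb:
  assumes "f \<in> Ulevel l G" "g \<in> Ulevel l G"
  shows "(\<lambda>x. a * f x + b * g x) \<in> Ulevel l G"
proof -
  obtain v w where
    "\<forall>j < grid_len G. v j \<in> C1 \<and> v j \<in> Vspan l" "f = pw_val G v" and
    "\<forall>j < grid_len G. w j \<in> C1 \<and> w j \<in> Vspan l" "g = pw_val G w"
    using assms unfolding Ulevel_def by blast
  then show ?thesis
    unfolding Ulevel_def
    by (intro CollectI exI[of _ "\<lambda>j x. a * v j x + b * w j x"])
      (auto simp: pw_val_linear C1_linear_comb Vspan_linear_comb)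
qed

lemma Ulevel_sum:
  assumes "finite A" "\<And>a. a \<in> A \<Longrightarrow> f a \<in> Ulevel l G"
  shows "(\<lambda>x. \<Sum>a\<in>A. c a * f a x) \<in> Ulevel l G"
  using assms
proof (induction A rule: finite_induct)
  case empty
  then show ?case using zero_in_Ulevel by simp
next
  case (insert a A)
  then have "(\<lambda>x. c a * f a x + 1 * (\<Sum>a\<in>A. c a * f a x)) \<in> Ulevel l G"
    by (intro Ulevel_linear_comb) auto
  then show ?case using insert by simp
qed

lemma C1_continuous:
  assumes "f \<in> C1"
  shows "continuous_on UNIV f"
proof -
  obtain f' where "\<And>x. (f has_real_derivative f' x) (at x)" using assms unfolding C1_def by blast
  then show ?thesis by (intro continuous_at_imp_continuous_on ballI) (rule DERIV_isCont)
qed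

lemma grid_pt_in:
  assumes "finite G" "G \<noteq> {}" "j \<le> grid_len G"
  shows "grid_pt G j \<in> G"
proof -
  have "card G > 0" using assms by (simp add: card_gt_0_iff)
  then have "j < length (sorted_list_of_set G)" using assms unfolding grid_len_def by simp
  then show ?thesis unfolding grid_pt_def using assms(1) by (metis nth_mem set_sorted_list_of_set)
qed

lemma grid_index_le:
  assumes "finite G" "x \<in> G"
  shows "(THE j. j \<le> grid_len G \<and> grid_pt G j = x) \<le> grid_len G"
proof -
  let ?xs = "sorted_list_of_set G"
  have len: "length ?xs = grid_len G + 1"
    using assms unfolding grid_len_def
    by (metis Suc_eq_plus1 Suc_pred' card_gt_0_iff empty_iff length_sorted_list_of_set)
  obtain j where j: "j < length ?xs" "?xs ! j = x"
    using assms by (metis in_set_conv_nth set_sorted_list_of_set)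
  have "(THE j. j \<le> grid_len G \<and> grid_pt G j = x) = j"
  proof (rule the_equality)
    show "j \<le> grid_len G \<and> grid_pt G j = x" using j len unfolding grid_pt_def by simp
    fix i assume "i \<le> grid_len G \<and> grid_pt G i = x"
    show "i = j"
    proof -
      have "i < length ?xs" "?xs ! i = ?xs ! j"
        using \<open>i \<le> grid_len G \<and> grid_pt G i = x\<close> j len unfolding grid_pt_def by auto
      then show "i = j" using j distinct_sorted_list_of_set[of G] nth_eq_iff_index_eq by blast
    qed
  qed
  then show ?thesis using j len by simp
qed

text \<open>With a single grid point there are no pieces, yet \<open>pw_val\<close> takes the value \<open>v 0\<close>
there; hence the assumption of at least two grid points.\<close>

lemma abs_pw_val_le:
  assumes "finite G" "1 \<le> grid_len G"
  shows "\<bar>pw_val G v x\<bar> \<le> (\<Sum>j<grid_len G. \<bar>v j x\<bar>)"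
proof -
  let ?n = "grid_len G" and ?S = "\<Sum>j<grid_len G. \<bar>v j x\<bar>"
  have piece: "\<bar>v j x\<bar> \<le> ?S" if "j < ?n" for j
    using that by (intro member_le_sum) auto
  show ?thesis
  proof (cases "x \<in> G")
    case True
    define j where "j = (THE j. j \<le> ?n \<and> grid_pt G j = x)"
    have jn: "j \<le> ?n" unfolding j_def using assms(1) True by (rule grid_index_le)
    have pw: "pw_val G v x = (if j = 0 then v 0 x else if j = ?n then v (?n - 1) x
                              else (v (j - 1) x + v j x) / 2)"
      unfolding pw_val_def Let_def j_def using True by simp
    show ?thesis
    proof (cases "j = 0 \<or> j = ?n")
      case True
      then show ?thesis using pw piece[of 0] piece[of "?n - 1"] assms(2) by auto
    next
      case False
      then have "\<bar>v (j - 1) x\<bar> \<le> ?S" "\<bar>v j x\<bar> \<le> ?S" using jn piece by auto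
      then have "\<bar>v (j - 1) x + v j x\<bar> \<le> 2 * ?S"
        using abs_triangle_ineq[of "v (j - 1) x" "v j x"] by linarith
      then show ?thesis using pw False by simp
    qed
  next
    case False
    then have "\<bar>pw_val G v x\<bar>
        = \<bar>\<Sum>j<?n. if grid_pt G j < x \<and> x < grid_pt G (Suc j) then v j x else 0\<bar>"
      unfolding pw_val_def Let_def by simp
    also have "\<dots> \<le> ?S" by (rule order_trans[OF sum_abs sum_mono]) auto
    finally show ?thesis .
  qed
qed

lemma pw_val_outside:
  assumes "finite G" "G \<noteq> {}" "x \<notin> {Min G..Max G}"
  shows "pw_val G v x = 0"
proof -
  have "\<not> (grid_pt G j < x \<and> x < grid_pt G (Suc j))" if "j < grid_len G" for j
  proof -
    have "grid_pt G j \<in> G" "grid_pt G (Suc j) \<in> G" using grid_pt_in[OF assms(1,2)] that by auto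
    then have "Min G \<le> grid_pt G j" "grid_pt G (Suc j) \<le> Max G" using assms(1) by auto
    then show ?thesis using assms(3) by auto
  qed
  then have "(\<Sum>j<grid_len G. if grid_pt G j < x \<and> x < grid_pt G (Suc j) then v j x else 0) = 0"
    by (intro sum.neutral) auto
  moreover have "x \<notin> G" using assms by auto
  ultimately show ?thesis unfolding pw_val_def Let_def by simp
qed

lemma pw_val_borel_measurable:
  assumes "finite G" and cont: "\<And>j. j < grid_len G \<Longrightarrow> continuous_on UNIV (v j)"
  shows "pw_val G v \<in> borel_measurable borel"
proof -
  define B where
    "B = (\<lambda>x. \<Sum>j<grid_len G. if grid_pt G j < x \<and> x < grid_pt G (Suc j) then v j x else 0)"
  have "B \<in> borel_measurable borel"
    unfolding B_def
  proof (intro borel_measurable_sum)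
    fix j assume "j \<in> {..<grid_len G}"
    then have "v j \<in> borel_measurable borel" using cont borel_measurable_continuous_onI by auto
    then show "(\<lambda>x. if grid_pt G j < x \<and> x < grid_pt G (Suc j) then v j x else 0) \<in> borel_measurable borel"
      by measurable
  qed
  then show ?thesis
  proof (rule measurable_discrete_difference)
    show "countable G" using assms(1) by (rule countable_finite)
    show "B x = pw_val G v x" if "x \<notin> G" for x
      using that unfolding B_def pw_val_def Let_def by simp
  qed simp_all
qed

lemma Ulevel_vanishes_outside:
  assumes "finite G" "G \<noteq> {}" "f \<in> Ulevel l G" "x \<notin> {Min G..Max G}"
  shows "f x = 0"
  using assms pw_val_outside unfolding Ulevel_def by blast

lemma Ulevel_bounded_compact_support:
  assumes G: "finite G" "1 \<le> grid_len G" and f: "f \<in> Ulevel l G"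
  shows "bounded_compact_support f"
proof -
  obtain v where v: "\<forall>j < grid_len G. v j \<in> C1" and f_def: "f = pw_val G v"
    using f unfolding Ulevel_def by blast
  let ?M = "\<lambda>x. \<Sum>j<grid_len G. \<bar>v j x\<bar>"
  have G_ne: "G \<noteq> {}" using G unfolding grid_len_def by auto
  have cont: "\<And>j. j < grid_len G \<Longrightarrow> continuous_on UNIV (v j)" using v C1_continuous by blast
  have "compact (?M ` {Min G..Max G})"
    by (intro compact_continuous_image continuous_intros continuous_on_subset[OF cont]) auto
  then obtain C where "\<forall>y\<in>?M ` {Min G..Max G}. norm y \<le> C"
    using compact_imp_bounded bounded_iff by blast
  then have C: "\<And>x. x \<in> {Min G..Max G} \<Longrightarrow> \<bar>?M x\<bar> \<le> C" by simp
  have "\<bar>f x\<bar> \<le> C * indicator {Min G..Max G} x" for x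
  proof (cases "x \<in> {Min G..Max G}")
    case True
    then show ?thesis using abs_pw_val_le[OF G, of v x] C[OF True] f_def by simp
  next
    case False
    then show ?thesis using Ulevel_vanishes_outside[OF G(1) G_ne f] by simp
  qed
  moreover have "f \<in> borel_measurable borel"
    unfolding f_def using G(1) cont by (rule pw_val_borel_measurable)
  ultimately show ?thesis unfolding bounded_compact_support_def by blast
qed

text \<open>Since an ultrafilter decides every property, a levelwise counterexample on a set of
levels in \<open>F\<close> would, by choice, yield an internal counterexample.\<close>

lemma fine_ultrafilter_eventually_ball:
  assumes F: "fine_ultrafilter F"
    and internal: "\<And>q. eventually (\<lambda>l. q l \<in> S l) F \<Longrightarrow> eventually (\<lambda>l. P l (q l)) F"
  shows "eventually (\<lambda>l. \<forall>y\<in>S l. P l y) F"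
proof (rule ccontr)
  assume "\<not> ?thesis"
  with F have "eventually (\<lambda>l. \<not> (\<forall>y\<in>S l. P l y)) F"
    unfolding fine_ultrafilter_def by blast
  then have "eventually (\<lambda>l. \<exists>y. y \<in> S l \<and> \<not> P l y) F"
    by (rule eventually_mono) blast
  then have witness: "eventually (\<lambda>l. (SOME y. y \<in> S l \<and> \<not> P l y) \<in> S l \<and>
                                      \<not> P l (SOME y. y \<in> S l \<and> \<not> P l y)) F"
    by (rule eventually_mono) (rule someI_ex)
  then have "eventually (\<lambda>l. P l (SOME y. y \<in> S l \<and> \<not> P l y)) F"
    by (auto intro: internal elim: eventually_mono)
  with witness have "eventually (\<lambda>l. False) F"
    by (rule eventually_elim2) simp
  with F show False unfolding fine_ultrafilter_def by simp
qed

lemma grid_len_ge_1: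
  assumes "finite G" "G \<noteq> {}" "Min G < Max G"
  shows "1 \<le> grid_len G"
proof -
  have "{Min G, Max G} \<subseteq> G" using assms(1,2) by simp
  then have "card {Min G, Max G} \<le> card G" by (rule card_mono[OF assms(1)])
  then show ?thesis using assms(3) unfolding grid_len_def by simp
qed

locale Delta_Sigma_bases =
  fixes F :: "idx filter" and \<beta> \<eta> :: hr and G S :: "idx \<Rightarrow> real set"
    and d s :: "idx \<Rightarrow> real \<Rightarrow> real \<Rightarrow> real"
  assumes fine: "fine_ultrafilter F"
    and grid: "grid_ok F \<beta> \<eta> G"
    and delta: "delta_basis F \<beta> G S d"
    and dual: "dual_basis F G S d s"
begin

definition regular_level :: "idx \<Rightarrow> bool" where
  "regular_level l \<longleftrightarrow> finite (S l) \<and> finite (G l) \<and> 1 \<le> grid_len (G l) \<and>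
     Min (G l) = - \<beta> l \<and> Max (G l) = \<beta> l \<and>
     (\<forall>q\<in>S l. d l q \<in> Ulevel l (G l) \<and> s l q \<in> Ulevel l (G l)) \<and>
     (\<forall>a\<in>S l. \<forall>b\<in>S l. (\<integral>x. d l a x * s l b x \<partial>lborel) = (if a = b then 1 else 0))"

lemma eventually_regular_level: "eventually regular_level F"
proof -
  have "eventually (\<lambda>l. \<forall>q\<in>S l. d l q \<in> Ulevel l (G l)) F"
    using delta by (intro fine_ultrafilter_eventually_ball[OF fine])
      (auto simp: delta_basis_def is_delta_def hmem_def inU_def fam_def)
  moreover have "eventually (\<lambda>l. \<forall>q\<in>S l. s l q \<in> Ulevel l (G l)) F"
    using dual by (intro fine_ultrafilter_eventually_ball[OF fine])
      (auto simp: dual_basis_def hmem_def inU_def fam_def)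
  moreover have "eventually (\<lambda>l. \<forall>a\<in>S l. \<forall>b\<in>S l.
      (\<integral>x. d l a x * s l b x \<partial>lborel) = (if a = b then 1 else 0)) F"
    using dual
    by (intro fine_ultrafilter_eventually_ball[OF fine])+
      (auto simp: dual_basis_def hmem_def heq_def hint_def fam_def)
  moreover have "eventually (\<lambda>l. finite (S l)) F"
    using delta by (simp add: delta_basis_def)
  moreover have "eventually (\<lambda>l. 0 < \<beta> l) F"
    using grid unfolding grid_ok_def by (metis of_nat_0)
  moreover have "eventually (\<lambda>l. finite (G l) \<and> G l \<noteq> {} \<and> Min (G l) = - \<beta> l \<and> Max (G l) = \<beta> l) F"
    using grid unfolding grid_ok_def by blast
  ultimately show ?thesis
    unfolding regular_level_def
  proof eventually_elim
    case (elim l)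
    then have "1 \<le> grid_len (G l)" by (intro grid_len_ge_1) auto
    with elim show ?case by blast
  qed
qed

lemma regular_level_Ulevel:
  assumes "regular_level l" "f \<in> Ulevel l (G l)"
  shows "bounded_compact_support f"
    and "x \<notin> {- \<beta> l..\<beta> l} \<Longrightarrow> f x = 0"
proof -
  have G: "finite (G l)" "1 \<le> grid_len (G l)" "Min (G l) = - \<beta> l" "Max (G l) = \<beta> l"
    using assms(1) unfolding regular_level_def by auto
  then have "G l \<noteq> {}" unfolding grid_len_def by auto
  with G assms(2) show "bounded_compact_support f" "x \<notin> {- \<beta> l..\<beta> l} \<Longrightarrow> f x = 0"
    using Ulevel_bounded_compact_support Ulevel_vanishes_outside by metis+
qed

text \<open>The Delta-expansion is only required to agree with \<open>v\<close> on \<open>[-\<beta>, \<beta>]\<close>; outside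
both sides vanish at regular levels.\<close>

lemma inU_expansion:
  assumes v: "inU F G v"
  obtains c where "eventually (\<lambda>l. v l = (\<lambda>x. \<Sum>a\<in>S l. c l a * d l a x)) F"
proof -
  obtain c where c: "feq F \<beta> v (\<lambda>l x. \<Sum>a\<in>S l. c l a * d l a x)"
    using delta v unfolding delta_basis_def by blast
  have "eventually (\<lambda>l. \<forall>x\<in>{- \<beta> l..\<beta> l}. v l x = (\<Sum>a\<in>S l. c l a * d l a x)) F"
    using c by (intro fine_ultrafilter_eventually_ball[OF fine])
      (simp add: feq_def heq_def app_def in_hint_def)
  then have "eventually (\<lambda>l. v l = (\<lambda>x. \<Sum>a\<in>S l. c l a * d l a x)) F"
    using eventually_regular_level v unfolding inU_def
  proof eventually_elim
    case (elim l)
    then have expansion_U: "(\<lambda>x. \<Sum>a\<in>S l. c l a * d l a x) \<in> Ulevel l (G l)"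
      by (intro Ulevel_sum) (auto simp: regular_level_def)
    show ?case
    proof
      fix x
      show "v l x = (\<Sum>a\<in>S l. c l a * d l a x)"
        using elim(1) regular_level_Ulevel(2)[OF elim(2) elim(3)]
          regular_level_Ulevel(2)[OF elim(2) expansion_U]
        by (cases "x \<in> {- \<beta> l..\<beta> l}") simp_all
    qed
  qed
  then show thesis by (rule that)
qed

definition U_proj :: "ifun \<Rightarrow> ifun" where
  "U_proj u = (\<lambda>l x. \<Sum>q\<in>S l. (\<integral>y. u l y * d l q y \<partial>lborel) * s l q x)"

lemma inU_U_proj: "inU F G (U_proj u)"
  unfolding inU_def U_proj_def using eventually_regular_level
  by eventually_elim (intro Ulevel_sum, auto simp: regular_level_def)

lemma hint_U_proj:
  assumes u: "inL1locStar F u" and v: "inU F G v"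
  shows "heq F (hint (U_proj u) v) (hint u v)"
proof -
  obtain c where "eventually (\<lambda>l. v l = (\<lambda>x. \<Sum>a\<in>S l. c l a * d l a x)) F"
    using v by (rule inU_expansion)
  then show ?thesis
    unfolding heq_def using eventually_regular_level u[unfolded inL1locStar_def]
  proof eventually_elim
    case (elim l)
    then show ?case
      unfolding hint_def U_proj_def
      using integral_biorthogonal_projection[of "S l" "d l" "s l" "u l" "c l"]
        regular_level_Ulevel(1)[OF elim(2)] by (simp add: regular_level_def)
  qed
qed

lemma solution_Delta_expansion:
  assumes w: "inU F G w" and solves: "\<And>v. inU F G v \<Longrightarrow> heq F (hint w v) (hint u v)"
  shows "eventually (\<lambda>l. w l = (\<lambda>x. \<Sum>b\<in>S l. (\<integral>y. u l y * s l b y \<partial>lborel) * d l b x)) F"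
proof -
  obtain c where c: "eventually (\<lambda>l. w l = (\<lambda>x. \<Sum>a\<in>S l. c l a * d l a x)) F"
    using w by (rule inU_expansion)
  have "eventually (\<lambda>l. \<forall>b\<in>S l.
      (\<integral>x. w l x * s l b x \<partial>lborel) = (\<integral>x. u l x * s l b x \<partial>lborel)) F"
    using dual solves
    by (intro fine_ultrafilter_eventually_ball[OF fine])
      (simp add: dual_basis_def hmem_def heq_def hint_def fam_def)
  with c show ?thesis using eventually_regular_level
  proof eventually_elim
    case (elim l)
    have "c l b = (\<integral>x. u l x * s l b x \<partial>lborel)" if "b \<in> S l" for b
      using elim that regular_level_Ulevel(1)[OF elim(3)]
        integral_lincomb_mult_biorthogonal[of "S l" b "d l" "s l" "c l"]
      by (simp add: regular_level_def)
    with elim(1) show ?case by simp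
  qed
qed

end

theorem mainTheorem6:
  fixes F :: "idx filter" and \<beta> \<eta> :: hr and G S :: "idx \<Rightarrow> real set"
    and d s :: "idx \<Rightarrow> real \<Rightarrow> real \<Rightarrow> real" and u :: ifun
  assumes "fine_ultrafilter F"
    and "grid_ok F \<beta> \<eta> G"
    and "delta_basis F \<beta> G S d"
    and "dual_basis F G S d s"
    and "inL1locStar F u"
  shows "(\<exists>ut. inU F G ut \<and> (\<forall>v. inU F G v \<longrightarrow> heq F (hint ut v) (hint u v)) \<and>
            (\<forall>x. in_hint F \<beta> x \<longrightarrow>
               heq F (app ut x) (\<lambda>l. \<Sum>q\<in>S l. hint u (fam d (\<lambda>_. q)) l * s l q (x l)) \<and>
               heq F (app ut x) (\<lambda>l. \<Sum>q\<in>S l. hint u (fam s (\<lambda>_. q)) l * d l q (x l))))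
       \<and> (\<forall>w1 w2. inU F G w1 \<and> (\<forall>v. inU F G v \<longrightarrow> heq F (hint w1 v) (hint u v)) \<and>
                  inU F G w2 \<and> (\<forall>v. inU F G v \<longrightarrow> heq F (hint w2 v) (hint u v))
                  \<longrightarrow> feq F \<beta> w1 w2)"
proof -
  interpret Delta_Sigma_bases F \<beta> \<eta> G S d s
    using assms(1-4) by unfold_locales
  let ?ut = "U_proj u"
  have expansion_in_Delta_basis: "heq F (app ?ut x) (\<lambda>l. \<Sum>q\<in>S l. hint u (fam s (\<lambda>_. q)) l * d l q (x l))" for x
    using solution_Delta_expansion[OF inU_U_proj hint_U_proj[OF assms(5)]]
    unfolding heq_def app_def hint_def fam_def by (auto elim: eventually_mono)
  have expansion_in_Sigma_basis: "heq F (app ?ut x) (\<lambda>l. \<Sum>q\<in>S l. hint u (fam d (\<lambda>_. q)) l * s l q (x l))" for x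
    unfolding heq_def app_def U_proj_def hint_def fam_def by simp
  have unique: "feq F \<beta> w1 w2"
    if "inU F G w1" "\<forall>v. inU F G v \<longrightarrow> heq F (hint w1 v) (hint u v)"
       "inU F G w2" "\<forall>v. inU F G v \<longrightarrow> heq F (hint w2 v) (hint u v)" for w1 w2
  proof -
    have "eventually (\<lambda>l. w1 l = w2 l) F"
      using solution_Delta_expansion[of w1 u] solution_Delta_expansion[of w2 u] that
      by (auto elim: eventually_elim2)
    then show ?thesis unfolding feq_def heq_def app_def by (auto elim: eventually_mono)
  qed
  show ?thesis
    using inU_U_proj hint_U_proj[OF assms(5)] expansion_in_Delta_basis expansion_in_Sigma_basis unique by blast
qed

end
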